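(* Consider a Markov decision process with state space $\mathcal{S}=[0,1]^d$, action space $\mathcal{A}=\mathbb{R}$, environment transition kernel $P(s'\mid s,a)$, discount factor $\gamma\in[0,1)$, horizon $T\in\mathbb{N}\cup\{\infty\}$, and reward function $r:\mathcal{S}\times\mathcal{A}\to[r_{\min},r_{\max}]$ with $|r(s,a)|\le r_{\max}$ for all $(s,a)$. Let $$f(s)=\sum_{i=1}^H W_{2,i}\,\phi\Big(\sum_{k=1}^d W_{1,ik}s_k+b_{1,i}\Big)+b_2$$ be a one-hidden-layer fully connected network, where $\phi:\mathbb{R}\to(a,b)\subseteq\mathbb{R}$ is $L_\phi$-Lipschitz. Fix an input index $j\in\{1,\dots,d\}$ and let $f_p$ be the "pruned" network obtained from $f$ by setting $W_{1,ij}=0$ for all $i=1,\dots,H$ (all other parameters unchanged). Let $\sigma_f>0$ and define the Gaussian policies $\pi_\theta(\cdot\mid s)=\mathcal{N}(f(s),\sigma_f^2)$ and $\pi_{\theta_p}(\cdot\mid s)=\mathcal{N}(f_p(s),\sigma_f^2)$. For $i\in\{1,2\}$ (index $1$ for $\pi_\theta$, index $2$ for $\pi_{\theta_p}$), let $p_i(s'\mid s)=\int P(s'\mid s,a)\,\pi_i(a\mid s)\,da$ be the induced state-to-state kernel, let both processes start from the same initial state distribution $p_1^0=p_2^0$, and let $p_i^t$ denote the state distribution at time $t$, i.e. $p_i^t(s')=\int p_i(s'\mid s)p_i^{t-1}(s)\,ds$. Assume $\delta\ge 0$ is such that $\sup_t \mathbb{E}_{s\sim p_1^{t}}\big[D_{TV}(p_1(\cdot\mid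 s)\,\|\,p_2(\cdot\mid s))\big]\le\delta$. Then $$|J(\pi_\theta)-J(\pi_{\theta_p})|\le 2r_{\max}\Big[\frac{\gamma\delta}{(1-\gamma)^2}+\frac{B_j}{\sigma_f(1-\gamma)}\Big],\qquad B_j=L_\phi\sum_{i=1}^H|W_{2,i}W_{1,ij}|.$$
   Context: For a policy $\pi$, $J(\pi)=\mathbb{E}\big[\sum_{t=0}^T\gamma^t r(s_t,a_t)\big]$ where $s_0\sim p^0$, $a_t\sim\pi(\cdot\mid s_t)$, $s_{t+1}\sim P(\cdot\mid s_t,a_t)$. The total variation distance between densities $p,q$ on the same space is $D_{TV}(p\|q)=\frac12\int|p(x)-q(x)|\,dx$. *)

theory Defs
  imports "HOL-Probability.Probability" "HOL-Library.Extended_Nat"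
begin

text \<open>State space [0,1]^d, with d encoded by the finite index type 'd.\<close>
definition state_space :: "(real ^ 'd) set" where
  "state_space = {s. \<forall>k. 0 \<le> s $ k \<and> s $ k \<le> 1}"

text \<open>One-hidden-layer network; hidden units indexed by the finite type 'h.\<close>
definition net :: "real ^ 'd ^ 'h \<Rightarrow> real ^ 'h \<Rightarrow> real ^ 'h \<Rightarrow> real \<Rightarrow> (real \<Rightarrow> real)
                    \<Rightarrow> real ^ 'd \<Rightarrow> real" where
  "net W1 b1 W2 b2 \<phi> s =
     (\<Sum>i\<in>UNIV. W2 $ i * \<phi> ((\<Sum>k\<in>UNIV. W1 $ i $ k * s $ k) + b1 $ i)) + b2"

definition prune :: "'d \<Rightarrow> real ^ 'd ^ 'h \<Rightarrow> real ^ 'd ^ 'h" where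
  "prune j W1 = (\<chi> i. \<chi> k. if k = j then 0 else W1 $ i $ k)"

definition gauss_policy :: "('s \<Rightarrow> real) \<Rightarrow> real \<Rightarrow> 's \<Rightarrow> real \<Rightarrow> real" where
  "gauss_policy f \<sigma> s a = normal_density (f s) \<sigma> a"

definition induced_kernel ::
  "('s \<Rightarrow> real \<Rightarrow> 's \<Rightarrow> real) \<Rightarrow> ('s \<Rightarrow> real \<Rightarrow> real) \<Rightarrow> 's \<Rightarrow> 's \<Rightarrow> real" where
  "induced_kernel P \<pi> s s' = (LINT a|lborel. P s a s' * \<pi> s a)"

fun marginal :: "'s::euclidean_space set \<Rightarrow> ('s \<Rightarrow> real) \<Rightarrow> ('s \<Rightarrow> 's \<Rightarrow> real)
                  \<Rightarrow> nat \<Rightarrow> 's \<Rightarrow> real" where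
  "marginal S p0 k 0 = p0"
| "marginal S p0 k (Suc t) = (\<lambda>s'. LINT s:S|lborel. k s s' * marginal S p0 k t s)"

definition tv_dist :: "'s::euclidean_space set \<Rightarrow> ('s \<Rightarrow> real) \<Rightarrow> ('s \<Rightarrow> real) \<Rightarrow> real" where
  "tv_dist S p q = 1/2 * (LINT x:S|lborel. \<bar>p x - q x\<bar>)"

text \<open>Expected discounted return J(pi) = E[sum_{t=0}^T gamma^t r(s_t,a_t)], written via
  linearity of expectation as sum_t gamma^t E_{s ~ p^t, a ~ pi(.|s)}[r(s,a)];
  the horizon T is an extended natural (T = \<infinity> allowed).\<close>
definition J :: "'s::euclidean_space set \<Rightarrow> ('s \<Rightarrow> real \<Rightarrow> 's \<Rightarrow> real) \<Rightarrow> ('s \<Rightarrow> real)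
                 \<Rightarrow> ('s \<Rightarrow> real \<Rightarrow> real) \<Rightarrow> real \<Rightarrow> enat \<Rightarrow> ('s \<Rightarrow> real \<Rightarrow> real) \<Rightarrow> real" where
  "J S P p0 r \<gamma> T \<pi> =
     (\<Sum>t. if enat t \<le> T then
             \<gamma> ^ t * (LINT s:S|lborel. marginal S p0 (induced_kernel P \<pi>) t s *
                                     (LINT a|lborel. \<pi> s a * r s a))
           else 0)"

end

theory Submission
  imports Defs
begin

(*
  Both returns are discounted sums over t of E_{s ~ p_i^t} rho_i(s), where rho_i(s) is the
  mean reward of the Gaussian policy i at state s. Pruning input j moves the network output
  by at most B_j on [0,1]^d (phi is L_phi-Lipschitz and |s_j| <= 1), and two Gaussians with
  common variance sigma^2 are at L1-distance at most |m_1 - m_2| / sigma; hence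
  |rho_1 - rho_2| <= r_max B_j / sigma. Writing p' = int k(s,.) p(s) ds and splitting
  k_1 p_1 - k_2 p_2 = (k_1 - k_2) p_1 + k_2 (p_1 - p_2) shows that the L1-distance of the
  state marginals grows by at most 2 delta per step, so it is at most 2 t delta at time t.
  The t-th terms therefore differ by at most r_max (B_j / sigma + 2 t delta), and
  sum gamma^t = 1/(1-gamma), sum t gamma^t = gamma/(1-gamma)^2 give the bound, with a
  factor 2 to spare on the B_j term.
*)

section \<open>Measurability and iterated integrals on lborel\<close>

lemma borel_measurable_fst [measurable]:
  "fst \<in> borel_measurable (borel :: ('a::second_countable_topology \<times> 'b::second_countable_topology) measure)"
  by (intro borel_measurable_continuous_onI continuous_intros)

lemma borel_measurable_snd [measurable]:
  "snd \<in> borel_measurable (borel :: ('a::second_countable_topology \<times> 'b::second_countable_topology) measure)"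
  by (intro borel_measurable_continuous_onI continuous_intros)

lemma borel_measurable_curried2:
  fixes k :: "'a::second_countable_topology \<Rightarrow> 'b::second_countable_topology \<Rightarrow> 'c::{second_countable_topology,banach}"
  assumes k: "(\<lambda>x. k (fst x) (snd x)) \<in> borel_measurable borel"
    and f: "f \<in> borel_measurable M" and g: "g \<in> borel_measurable M"
  shows "(\<lambda>x. k (f x) (g x)) \<in> borel_measurable M"
proof -
  have "(\<lambda>x. (f x, g x)) \<in> M \<rightarrow>\<^sub>M (borel \<Otimes>\<^sub>M borel)" using f g by measurable
  then have "(\<lambda>x. (f x, g x)) \<in> M \<rightarrow>\<^sub>M borel" by (simp add: borel_prod)
  from measurable_compose[OF this k] show ?thesis by simp
qed

lemma borel_measurable_curried3:
  fixes P :: "'a::second_countable_topology \<Rightarrow> 'b::second_countable_topology \<Rightarrow> 'c::second_countable_topology \<Rightarrow> real"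
  assumes P: "(\<lambda>x. P (fst x) (fst (snd x)) (snd (snd x))) \<in> borel_measurable borel"
    and f: "f \<in> borel_measurable M" and g: "g \<in> borel_measurable M" and h: "h \<in> borel_measurable M"
  shows "(\<lambda>x. P (f x) (g x) (h x)) \<in> borel_measurable M"
proof -
  have "(\<lambda>x. (g x, h x)) \<in> M \<rightarrow>\<^sub>M (borel \<Otimes>\<^sub>M borel)" using g h by measurable
  then have gh: "(\<lambda>x. (g x, h x)) \<in> M \<rightarrow>\<^sub>M borel" by (simp add: borel_prod)
  have "(\<lambda>x. (f x, g x, h x)) \<in> M \<rightarrow>\<^sub>M (borel \<Otimes>\<^sub>M borel)" using f gh by measurable
  then have "(\<lambda>x. (f x, g x, h x)) \<in> M \<rightarrow>\<^sub>M borel" by (simp add: borel_prod)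
  from measurable_compose[OF this P] show ?thesis by simp
qed

lemma borel_measurable_lborel_integral_curried:
  fixes f :: "'a::euclidean_space \<Rightarrow> 'b::euclidean_space \<Rightarrow> real"
  assumes "(\<lambda>x. f (fst x) (snd x)) \<in> borel_measurable borel"
  shows "(\<lambda>x. LINT y|lborel. f x y) \<in> borel_measurable borel"
proof -
  have "case_prod f \<in> borel_measurable (lborel \<Otimes>\<^sub>M lborel)"
    using assms by (simp add: lborel_prod case_prod_beta')
  from lborel.borel_measurable_lebesgue_integral[OF this] show ?thesis by simp
qed

lemma lborel_nn_integral_swap:
  fixes f :: "'a::euclidean_space \<Rightarrow> 'b::euclidean_space \<Rightarrow> ennreal"
  assumes "(\<lambda>x. f (fst x) (snd x)) \<in> borel_measurable borel"
  shows "(\<integral>\<^sup>+y. (\<integral>\<^sup>+x. f x y \<partial>lborel) \<partial>lborel) = (\<integral>\<^sup>+x. (\<integral>\<^sup>+y. f x y \<partial>lborel) \<partial>lborel)"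
proof -
  have "case_prod f \<in> borel_measurable (lborel \<Otimes>\<^sub>M lborel)"
    using assms by (simp add: lborel_prod case_prod_beta')
  from lborel_pair.Fubini'[OF this] show ?thesis .
qed

lemma
  fixes F :: "'a::euclidean_space \<Rightarrow> 'b::euclidean_space \<Rightarrow> real"
  assumes F: "(\<lambda>p. F (fst p) (snd p)) \<in> borel_measurable borel" and F_nonneg: "\<And>x y. 0 \<le> F x y"
    and finite: "(\<integral>\<^sup>+x. \<integral>\<^sup>+y. F x y \<partial>lborel \<partial>lborel) < \<infinity>"
  shows AE_integrable_inner_nonneg: "AE y in lborel. integrable lborel (\<lambda>x. F x y)"
    and nn_integral_inner_integral_nonneg:
      "(\<integral>\<^sup>+y. ennreal (LINT x|lborel. F x y) \<partial>lborel) = (\<integral>\<^sup>+x. \<integral>\<^sup>+y. F x y \<partial>lborel \<partial>lborel)"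
proof -
  have swap: "(\<integral>\<^sup>+y. \<integral>\<^sup>+x. F x y \<partial>lborel \<partial>lborel) = (\<integral>\<^sup>+x. \<integral>\<^sup>+y. F x y \<partial>lborel \<partial>lborel)"
    by (rule lborel_nn_integral_swap) (use F in measurable)
  have "(\<lambda>p. F (snd p) (fst p)) \<in> borel_measurable borel"
    by (rule borel_measurable_curried2[OF F]) measurable
  then have "(\<lambda>(y, x). ennreal (F x y)) \<in> borel_measurable (lborel \<Otimes>\<^sub>M lborel)"
    by (simp add: lborel_prod case_prod_beta')
  from lborel.borel_measurable_nn_integral[OF this]
  have finite_inner: "AE y in lborel. (\<integral>\<^sup>+x. F x y \<partial>lborel) \<noteq> \<infinity>"
    by (rule nn_integral_PInf_AE) (use finite swap in auto)
  have F_section: "(\<lambda>x. F x y) \<in> borel_measurable borel" for y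
    by (rule borel_measurable_curried2[OF F]) measurable
  show integrable: "AE y in lborel. integrable lborel (\<lambda>x. F x y)"
    using finite_inner by eventually_elim (rule integrableI_nonneg, auto simp: F_section F_nonneg top.not_eq_extremum)
  have "(\<integral>\<^sup>+y. ennreal (LINT x|lborel. F x y) \<partial>lborel) = (\<integral>\<^sup>+y. \<integral>\<^sup>+x. F x y \<partial>lborel \<partial>lborel)"
    by (rule nn_integral_cong_AE) (use integrable in \<open>eventually_elim, simp add: nn_integral_eq_integral F_nonneg\<close>)
  with swap show "(\<integral>\<^sup>+y. ennreal (LINT x|lborel. F x y) \<partial>lborel) = (\<integral>\<^sup>+x. \<integral>\<^sup>+y. F x y \<partial>lborel \<partial>lborel)"
    by simp
qed

lemma nn_integral_indicator_eq_set_integral: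
  fixes f :: "'a::euclidean_space \<Rightarrow> real"
  assumes "set_integrable lborel S f" and "\<And>x. x \<in> S \<Longrightarrow> 0 \<le> f x"
  shows "(\<integral>\<^sup>+x. ennreal (indicator S x * f x) \<partial>lborel) = ennreal (LINT x:S|lborel. f x)"
  using assms nn_integral_eq_integral[of lborel "\<lambda>x. indicator S x * f x"]
  by (simp add: set_integrable_def set_lebesgue_integral_def indicator_def)

lemma nn_integral_indicator_mult_const:
  fixes f :: "'a::euclidean_space \<Rightarrow> real"
  assumes "set_integrable lborel S f" and "\<And>x. x \<in> S \<Longrightarrow> 0 \<le> f x" and "0 \<le> c"
  shows "(\<integral>\<^sup>+x. ennreal (indicator S x * f x * c) \<partial>lborel) = ennreal (c * (LINT x:S|lborel. f x))"
proof -
  have "(\<integral>\<^sup>+x. ennreal (indicator S x * f x * c) \<partial>lborel)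
      = (\<integral>\<^sup>+x. ennreal (indicator S x * f x) * ennreal c \<partial>lborel)"
    using assms by (intro nn_integral_cong) (simp add: ennreal_mult indicator_def)
  also have "\<dots> = (\<integral>\<^sup>+x. ennreal (indicator S x * f x) \<partial>lborel) * ennreal c"
    by (rule nn_integral_multc) (use assms(1) in \<open>simp add: set_integrable_def borel_measurable_integrable\<close>)
  also have "\<dots> = ennreal (LINT x:S|lborel. f x) * ennreal c"
    by (simp only: nn_integral_indicator_eq_set_integral[OF assms(1,2)])
  finally show ?thesis
    by (simp add: ennreal_mult'[OF assms(3)] mult.commute)
qed

lemma
  fixes f :: "'a::euclidean_space \<Rightarrow> real"
  assumes f: "f \<in> borel_measurable borel" and f_nonneg: "\<And>x. x \<in> S \<Longrightarrow> 0 \<le> f x"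
    and S: "S \<in> sets borel" and c: "0 \<le> c"
    and nn: "(\<integral>\<^sup>+x. ennreal (indicator S x * f x) \<partial>lborel) = ennreal c"
  shows set_integrable_of_nn_integral: "set_integrable lborel S f"
    and set_integral_eq_of_nn_integral: "(LINT x:S|lborel. f x) = c"
proof -
  have nonneg: "\<And>x. 0 \<le> indicator S x * f x" using f_nonneg by (simp add: indicator_def)
  have "(\<lambda>x. indicator S x * f x) \<in> borel_measurable lborel" using f S by measurable
  then have int: "integrable lborel (\<lambda>x. indicator S x * f x)"
    by (rule integrableI_nonneg) (use nonneg nn in auto)
  then show "set_integrable lborel S f" by (simp add: set_integrable_def)
  have "ennreal (LINT x|lborel. indicator S x * f x) = ennreal c"
    using nn_integral_eq_integral[OF int] nonneg nn by simp
  then show "(LINT x:S|lborel. f x) = c"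
    using c nonneg by (simp add: integral_nonneg set_lebesgue_integral_def)
qed

lemma set_integral_nonneg_on:
  fixes f :: "'a \<Rightarrow> real"
  assumes "\<And>x. x \<in> S \<Longrightarrow> 0 \<le> f x"
  shows "0 \<le> (LINT x:S|M. f x)"
  unfolding set_lebesgue_integral_def
  by (intro Bochner_Integration.integral_nonneg) (simp add: assms indicator_def)

lemma abs_integral_diff_le_nn_integral:
  fixes g1 g2 :: "'a::euclidean_space \<Rightarrow> real"
  assumes "integrable lborel g1" and "integrable lborel g2" and "\<And>x. \<bar>g1 x - g2 x\<bar> \<le> h x"
  shows "ennreal \<bar>(LINT x|lborel. g1 x) - (LINT x|lborel. g2 x)\<bar> \<le> (\<integral>\<^sup>+x. ennreal (h x) \<partial>lborel)"
proof -
  have "ennreal \<bar>(LINT x|lborel. g1 x) - (LINT x|lborel. g2 x)\<bar> = ennreal (norm (LINT x|lborel. g1 x - g2 x))"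
    using assms by simp
  also have "\<dots> \<le> (\<integral>\<^sup>+x. norm (g1 x - g2 x) \<partial>lborel)"
    by (rule integral_norm_bound_ennreal) (use assms in simp)
  also have "\<dots> \<le> (\<integral>\<^sup>+x. ennreal (h x) \<partial>lborel)"
    by (intro nn_integral_mono ennreal_leI) (use assms in simp)
  finally show ?thesis .
qed

section \<open>Densities and stochastic kernels on a state set\<close>

definition prob_density :: "'a::euclidean_space set \<Rightarrow> ('a \<Rightarrow> real) \<Rightarrow> bool" where
  "prob_density S p \<longleftrightarrow> p \<in> borel_measurable borel \<and> (\<forall>s. 0 \<le> p s)
     \<and> set_integrable lborel S p \<and> (LINT s:S|lborel. p s) = 1"

definition stoch_kernel :: "'a::euclidean_space set \<Rightarrow> ('a \<Rightarrow> 'a \<Rightarrow> real) \<Rightarrow> bool" where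
  "stoch_kernel S k \<longleftrightarrow> (\<lambda>x. k (fst x) (snd x)) \<in> borel_measurable borel \<and> (\<forall>s s'. 0 \<le> k s s')
     \<and> (\<forall>s\<in>S. set_integrable lborel S (k s) \<and> (LINT s':S|lborel. k s s') = 1)"

lemma
  fixes k :: "'a::euclidean_space \<Rightarrow> 'a \<Rightarrow> real"
  assumes K: "stoch_kernel S k" and D: "prob_density S p" and S[measurable]: "S \<in> sets borel"
  shows prob_density_kernel_step: "prob_density S (\<lambda>s'. LINT s:S|lborel. k s s' * p s)"
    and AE_set_integrable_kernel_step:
      "AE s' in lborel. s' \<in> S \<longrightarrow> set_integrable lborel S (\<lambda>s. k s s' * p s)"
proof -
  from K have k[measurable]: "(\<lambda>x. k (fst x) (snd x)) \<in> borel_measurable borel"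
    and k_nonneg: "\<And>s s'. 0 \<le> k s s'" and k_int: "\<And>s. s \<in> S \<Longrightarrow> set_integrable lborel S (k s)"
    and k_total: "\<And>s. s \<in> S \<Longrightarrow> (LINT s':S|lborel. k s s') = 1"
    unfolding stoch_kernel_def by auto
  from D have [measurable]: "p \<in> borel_measurable borel" and p_nonneg: "\<And>s. 0 \<le> p s"
    and p_int: "set_integrable lborel S p" and p_total: "(LINT s:S|lborel. p s) = 1"
    unfolding prob_density_def by auto
  note borel_measurable_curried2[OF k, measurable (raw)]
  define F where "F = (\<lambda>s s'. indicator S s * (indicator S s' * k s s' * p s))"
  have F: "(\<lambda>x. F (fst x) (snd x)) \<in> borel_measurable borel" unfolding F_def by measurable
  have F_nonneg: "\<And>s s'. 0 \<le> F s s'" unfolding F_def using k_nonneg p_nonneg by simp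
  have "(\<integral>\<^sup>+s'. F s s' \<partial>lborel) = ennreal (indicator S s * p s)" for s
    using nn_integral_indicator_mult_const[OF k_int, of s "p s"] k_nonneg p_nonneg k_total
    by (cases "s \<in> S") (simp_all add: F_def)
  then have total: "(\<integral>\<^sup>+s. \<integral>\<^sup>+s'. F s s' \<partial>lborel \<partial>lborel) = 1"
    using nn_integral_indicator_eq_set_integral[OF p_int] p_nonneg p_total by simp
  have F_section: "(\<lambda>s. F s s') = (\<lambda>s. indicator S s' * (indicator S s *\<^sub>R (k s s' * p s)))" for s'
    by (auto simp: F_def)
  have nn: "(\<integral>\<^sup>+s'. ennreal (indicator S s' * (LINT s:S|lborel. k s s' * p s)) \<partial>lborel) = ennreal 1"
    using nn_integral_inner_integral_nonneg[OF F F_nonneg] total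
    by (simp add: F_section set_lebesgue_integral_def)
  have meas: "(\<lambda>s'. LINT s:S|lborel. k s s' * p s) \<in> borel_measurable borel"
  proof -
    have "(\<lambda>x. indicator S (snd x) *\<^sub>R (k (snd x) (fst x) * p (snd x))) \<in> borel_measurable borel"
      by measurable
    from borel_measurable_lborel_integral_curried[OF this] show ?thesis
      unfolding set_lebesgue_integral_def by simp
  qed
  have nonneg: "0 \<le> (LINT s:S|lborel. k s s' * p s)" for s'
    using k_nonneg p_nonneg by (intro set_integral_nonneg_on) simp
  show "prob_density S (\<lambda>s'. LINT s:S|lborel. k s s' * p s)"
    unfolding prob_density_def using meas nonneg
      set_integrable_of_nn_integral[OF meas _ S _ nn] set_integral_eq_of_nn_integral[OF meas _ S _ nn]
    by auto
  have "AE s' in lborel. integrable lborel (\<lambda>s. F s s')"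
    using AE_integrable_inner_nonneg[OF F F_nonneg] total by simp
  then show "AE s' in lborel. s' \<in> S \<longrightarrow> set_integrable lborel S (\<lambda>s. k s s' * p s)"
    by eventually_elim (auto simp: F_section set_integrable_def)
qed

lemma prob_density_marginal:
  assumes "stoch_kernel S k" and "prob_density S p0" and "S \<in> sets borel"
  shows "prob_density S (marginal S p0 k t)"
  by (induction t) (auto simp: assms intro: prob_density_kernel_step)

lemma stoch_kernel_induced_kernel:
  fixes P :: "'a::euclidean_space \<Rightarrow> real \<Rightarrow> 'a \<Rightarrow> real" and \<pi> :: "'a \<Rightarrow> real \<Rightarrow> real"
  assumes P: "(\<lambda>x. P (fst x) (fst (snd x)) (snd (snd x))) \<in> borel_measurable borel"
    and P_nonneg: "\<And>s a s'. 0 \<le> P s a s'"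
    and P_int: "\<And>s a. s \<in> S \<Longrightarrow> set_integrable lborel S (P s a)"
    and P_total: "\<And>s a. s \<in> S \<Longrightarrow> (LINT s':S|lborel. P s a s') = 1"
    and S[measurable]: "S \<in> sets borel"
    and \<pi>: "(\<lambda>x. \<pi> (fst x) (snd x)) \<in> borel_measurable borel"
    and \<pi>_nonneg: "\<And>s a. 0 \<le> \<pi> s a"
    and \<pi>_total: "\<And>s. (\<integral>\<^sup>+a. ennreal (\<pi> s a) \<partial>lborel) = 1"
  shows "stoch_kernel S (induced_kernel P \<pi>)"
proof -
  note borel_measurable_curried3[OF P, measurable (raw)] borel_measurable_curried2[OF \<pi>, measurable (raw)]
  have k: "(\<lambda>x. induced_kernel P \<pi> (fst x) (snd x)) \<in> borel_measurable borel"
  proof -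
    have "(\<lambda>y. P (fst (fst y)) (snd y) (snd (fst y)) * \<pi> (fst (fst y)) (snd y)) \<in> borel_measurable borel"
      by measurable
    from borel_measurable_lborel_integral_curried[OF this] show ?thesis
      unfolding induced_kernel_def by simp
  qed
  note borel_measurable_curried2[OF k, measurable (raw)]
  have k_nonneg: "\<And>s s'. 0 \<le> induced_kernel P \<pi> s s'"
    unfolding induced_kernel_def using P_nonneg \<pi>_nonneg by (intro Bochner_Integration.integral_nonneg) simp
  have "set_integrable lborel S (induced_kernel P \<pi> s) \<and> (LINT s':S|lborel. induced_kernel P \<pi> s s') = 1"
    if s: "s \<in> S" for s
  proof -
    define F where "F = (\<lambda>a s'. indicator S s' * P s a s' * \<pi> s a)"
    have F: "(\<lambda>x. F (fst x) (snd x)) \<in> borel_measurable borel" unfolding F_def by measurable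
    have F_nonneg: "\<And>a s'. 0 \<le> F a s'" unfolding F_def using P_nonneg \<pi>_nonneg by simp
    have "(\<integral>\<^sup>+s'. F a s' \<partial>lborel) = ennreal (\<pi> s a)" for a
      using nn_integral_indicator_mult_const[OF P_int[OF s] P_nonneg \<pi>_nonneg] P_total[OF s]
      by (simp add: F_def)
    then have "(\<integral>\<^sup>+s'. ennreal (LINT a|lborel. F a s') \<partial>lborel) = 1"
      using nn_integral_inner_integral_nonneg[OF F F_nonneg] \<pi>_total by simp
    moreover have "(LINT a|lborel. F a s') = indicator S s' * induced_kernel P \<pi> s s'" for s'
      unfolding F_def induced_kernel_def by (simp add: mult.assoc)
    ultimately have nn: "(\<integral>\<^sup>+s'. ennreal (indicator S s' * induced_kernel P \<pi> s s') \<partial>lborel) = ennreal 1"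
      by simp
    have "induced_kernel P \<pi> s \<in> borel_measurable borel" by measurable
    from set_integrable_of_nn_integral[OF this _ S _ nn] set_integral_eq_of_nn_integral[OF this _ S _ nn]
    show ?thesis using k_nonneg by auto
  qed
  then show ?thesis unfolding stoch_kernel_def using k k_nonneg by auto
qed

lemma
  fixes \<rho> :: "'a::euclidean_space \<Rightarrow> real"
  assumes D: "prob_density S p" and S[measurable]: "S \<in> sets borel"
    and [measurable]: "\<rho> \<in> borel_measurable borel" and bound: "\<And>s. s \<in> S \<Longrightarrow> \<bar>\<rho> s\<bar> \<le> R"
  shows set_integrable_density_mult: "set_integrable lborel S (\<lambda>s. p s * \<rho> s)"
    and abs_density_expectation_le: "\<bar>LINT s:S|lborel. p s * \<rho> s\<bar> \<le> R"
proof -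
  from D have [measurable]: "p \<in> borel_measurable borel" and p_nonneg: "\<And>s. 0 \<le> p s"
    and p_int: "set_integrable lborel S p" and p_total: "(LINT s:S|lborel. p s) = 1"
    unfolding prob_density_def by auto
  have pointwise: "\<bar>indicator S s *\<^sub>R (p s * \<rho> s)\<bar> \<le> indicator S s *\<^sub>R (p s * R)" for s
    using bound[of s] p_nonneg[of s] by (cases "s \<in> S") (auto simp: abs_mult intro!: mult_left_mono)
  have majorant: "integrable lborel (\<lambda>s. indicator S s *\<^sub>R (p s * R))"
    using p_int by (simp add: set_integrable_def mult.assoc[symmetric])
  have int: "integrable lborel (\<lambda>s. indicator S s *\<^sub>R (p s * \<rho> s))"
    by (rule Bochner_Integration.integrable_bound[OF majorant])
      (use pointwise in \<open>auto intro!: AE_I2 intro: order_trans[OF _ abs_ge_self]\<close>)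
  then show "set_integrable lborel S (\<lambda>s. p s * \<rho> s)" by (simp add: set_integrable_def)
  have "\<bar>LINT s:S|lborel. p s * \<rho> s\<bar> \<le> (LINT s:S|lborel. p s * R)"
    unfolding set_lebesgue_integral_def
    by (rule integral_abs_bound_integral) (use majorant pointwise int in auto)
  also have "\<dots> = R" using p_total unfolding set_lebesgue_integral_def by (simp add: mult.assoc[symmetric])
  finally show "\<bar>LINT s:S|lborel. p s * \<rho> s\<bar> \<le> R" .
qed

lemma density_expectation_diff_le:
  fixes \<rho>1 \<rho>2 :: "'a::euclidean_space \<Rightarrow> real"
  assumes D1: "prob_density S p1" and D2: "prob_density S p2" and S[measurable]: "S \<in> sets borel"
    and [measurable]: "\<rho>1 \<in> borel_measurable borel" "\<rho>2 \<in> borel_measurable borel"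
    and bound1: "\<And>s. s \<in> S \<Longrightarrow> \<bar>\<rho>1 s\<bar> \<le> R" and bound2: "\<And>s. s \<in> S \<Longrightarrow> \<bar>\<rho>2 s\<bar> \<le> R"
    and \<rho>_diff: "\<And>s. s \<in> S \<Longrightarrow> \<bar>\<rho>1 s - \<rho>2 s\<bar> \<le> E"
    and p_diff: "(LINT s:S|lborel. \<bar>p1 s - p2 s\<bar>) \<le> D" and R: "0 \<le> R"
  shows "\<bar>(LINT s:S|lborel. p1 s * \<rho>1 s) - (LINT s:S|lborel. p2 s * \<rho>2 s)\<bar> \<le> E + R * D"
proof -
  from D1 have p1_nonneg: "\<And>s. 0 \<le> p1 s" and p1_int: "set_integrable lborel S p1"
    and p1_total: "(LINT s:S|lborel. p1 s) = 1"
    unfolding prob_density_def by auto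
  from D2 have p2_int: "set_integrable lborel S p2" unfolding prob_density_def by auto
  have int1: "integrable lborel (\<lambda>s. indicator S s * (p1 s * \<rho>1 s))"
    using set_integrable_density_mult[OF D1 S _ bound1] by (simp add: set_integrable_def)
  have int2: "integrable lborel (\<lambda>s. indicator S s * (p2 s * \<rho>2 s))"
    using set_integrable_density_mult[OF D2 S _ bound2] by (simp add: set_integrable_def)
  have int_p1: "integrable lborel (\<lambda>s. indicator S s * p1 s)"
    using p1_int by (simp add: set_integrable_def)
  have int_diff: "integrable lborel (\<lambda>s. indicator S s * \<bar>p1 s - p2 s\<bar>)"
    using set_integrable_abs[OF set_integral_diff(1)[OF p1_int p2_int]] by (simp add: set_integrable_def)
  have pointwise: "\<bar>p1 s * \<rho>1 s - p2 s * \<rho>2 s\<bar> \<le> E * p1 s + R * \<bar>p1 s - p2 s\<bar>" if "s \<in> S" for s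
  proof -
    have "\<bar>p1 s * \<rho>1 s - p2 s * \<rho>2 s\<bar> = \<bar>p1 s * (\<rho>1 s - \<rho>2 s) + (p1 s - p2 s) * \<rho>2 s\<bar>"
      by (simp add: algebra_simps)
    also have "\<dots> \<le> \<bar>p1 s * (\<rho>1 s - \<rho>2 s)\<bar> + \<bar>(p1 s - p2 s) * \<rho>2 s\<bar>" by (rule abs_triangle_ineq)
    also have "\<bar>p1 s * (\<rho>1 s - \<rho>2 s)\<bar> \<le> p1 s * E"
      using p1_nonneg[of s] \<rho>_diff[OF that] by (auto simp: abs_mult intro!: mult_left_mono)
    also have "\<bar>(p1 s - p2 s) * \<rho>2 s\<bar> \<le> \<bar>p1 s - p2 s\<bar> * R"
      using bound2[OF that] by (auto simp: abs_mult intro!: mult_left_mono)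
    finally show ?thesis by (simp add: mult_ac)
  qed
  have "\<bar>(LINT s:S|lborel. p1 s * \<rho>1 s) - (LINT s:S|lborel. p2 s * \<rho>2 s)\<bar>
      = \<bar>LINT s|lborel. indicator S s * (p1 s * \<rho>1 s) - indicator S s * (p2 s * \<rho>2 s)\<bar>"
    unfolding set_lebesgue_integral_def using int1 int2 by simp
  also have "\<dots> \<le> (LINT s|lborel. E * (indicator S s * p1 s) + R * (indicator S s * \<bar>p1 s - p2 s\<bar>))"
  proof (rule integral_abs_bound_integral)
    fix s
    show "\<bar>indicator S s * (p1 s * \<rho>1 s) - indicator S s * (p2 s * \<rho>2 s)\<bar>
      \<le> E * (indicator S s * p1 s) + R * (indicator S s * \<bar>p1 s - p2 s\<bar>)"
      using pointwise by (cases "s \<in> S") (auto simp: mult_ac)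
  qed (use int1 int2 int_p1 int_diff in simp_all)
  also have "\<dots> = E * (LINT s:S|lborel. p1 s) + R * (LINT s:S|lborel. \<bar>p1 s - p2 s\<bar>)"
    using int_p1 int_diff unfolding set_lebesgue_integral_def by simp
  also have "\<dots> \<le> E + R * D"
    using p1_total p_diff R by (simp add: mult_left_mono)
  finally show ?thesis .
qed

lemma
  fixes k1 k2 :: "'a::euclidean_space \<Rightarrow> 'a \<Rightarrow> real"
  assumes K1: "stoch_kernel S k1" and K2: "stoch_kernel S k2" and s: "s \<in> S"
  shows tv_dist_kernel_nonneg: "0 \<le> tv_dist S (k1 s) (k2 s)"
    and tv_dist_kernel_le_1: "tv_dist S (k1 s) (k2 s) \<le> 1"
    and set_integrable_kernel_abs_diff: "set_integrable lborel S (\<lambda>s'. \<bar>k1 s s' - k2 s s'\<bar>)"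
    and set_integral_kernel_abs_diff:
      "(LINT s':S|lborel. \<bar>k1 s s' - k2 s s'\<bar>) = 2 * tv_dist S (k1 s) (k2 s)"
proof -
  from K1 s have k1_nonneg: "\<And>s s'. 0 \<le> k1 s s'" and k1_int: "set_integrable lborel S (k1 s)"
    and k1_total: "(LINT s':S|lborel. k1 s s') = 1" unfolding stoch_kernel_def by auto
  from K2 s have k2_nonneg: "\<And>s s'. 0 \<le> k2 s s'" and k2_int: "set_integrable lborel S (k2 s)"
    and k2_total: "(LINT s':S|lborel. k2 s s') = 1" unfolding stoch_kernel_def by auto
  show int: "set_integrable lborel S (\<lambda>s'. \<bar>k1 s s' - k2 s s'\<bar>)"
    by (intro set_integrable_abs set_integral_diff(1) k1_int k2_int)
  have "(LINT s':S|lborel. \<bar>k1 s s' - k2 s s'\<bar>) \<le> (LINT s':S|lborel. k1 s s' + k2 s s')"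
    by (intro set_integral_mono int set_integral_add(1) k1_int k2_int)
      (use k1_nonneg k2_nonneg in \<open>simp add: abs_le_iff\<close>)
  also have "\<dots> = 2" using k1_total k2_total k1_int k2_int by (simp add: set_integral_add)
  finally have "(LINT s':S|lborel. \<bar>k1 s s' - k2 s s'\<bar>) \<le> 2" .
  moreover have "0 \<le> (LINT s':S|lborel. \<bar>k1 s s' - k2 s s'\<bar>)"
    by (rule set_integral_nonneg_on) simp
  ultimately show "0 \<le> tv_dist S (k1 s) (k2 s)" "tv_dist S (k1 s) (k2 s) \<le> 1"
    "(LINT s':S|lborel. \<bar>k1 s s' - k2 s s'\<bar>) = 2 * tv_dist S (k1 s) (k2 s)"
    unfolding tv_dist_def by auto
qed

lemma borel_measurable_tv_dist_kernel:
  fixes k1 k2 :: "'a::euclidean_space \<Rightarrow> 'a \<Rightarrow> real"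
  assumes "stoch_kernel S k1" and "stoch_kernel S k2" and [measurable]: "S \<in> sets borel"
  shows "(\<lambda>s. tv_dist S (k1 s) (k2 s)) \<in> borel_measurable borel"
proof -
  from assms have k1: "(\<lambda>x. k1 (fst x) (snd x)) \<in> borel_measurable borel"
    and k2: "(\<lambda>x. k2 (fst x) (snd x)) \<in> borel_measurable borel"
    unfolding stoch_kernel_def by auto
  note borel_measurable_curried2[OF k1, measurable (raw)] borel_measurable_curried2[OF k2, measurable (raw)]
  have "(\<lambda>x. indicator S (snd x) *\<^sub>R \<bar>k1 (fst x) (snd x) - k2 (fst x) (snd x)\<bar>) \<in> borel_measurable borel"
    by measurable
  from borel_measurable_lborel_integral_curried[OF this] show ?thesis
    unfolding tv_dist_def set_lebesgue_integral_def by simp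
qed

lemma nn_integral_kernel_abs_diff_combination:
  fixes k1 k2 :: "'a::euclidean_space \<Rightarrow> 'a \<Rightarrow> real"
  assumes K1: "stoch_kernel S k1" and K2: "stoch_kernel S k2" and s: "s \<in> S"
    and c: "0 \<le> c" and d: "0 \<le> d"
  shows "(\<integral>\<^sup>+s'. ennreal (indicator S s' * (\<bar>k1 s s' - k2 s s'\<bar> * c + k2 s s' * d)) \<partial>lborel)
    = ennreal (2 * c * tv_dist S (k1 s) (k2 s) + d)"
proof -
  from K2 s have k2_nonneg: "\<And>s'. 0 \<le> k2 s s'" and k2_int: "set_integrable lborel S (k2 s)"
    and k2_total: "(LINT s':S|lborel. k2 s s') = 1" unfolding stoch_kernel_def by auto
  have int: "set_integrable lborel S (\<lambda>s'. \<bar>k1 s s' - k2 s s'\<bar> * c + k2 s s' * d)"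
    using set_integrable_kernel_abs_diff[OF K1 K2 s] k2_int
    by (intro set_integral_add(1) set_integrable_mult_left)
  have "(LINT s':S|lborel. \<bar>k1 s s' - k2 s s'\<bar> * c + k2 s s' * d) = 2 * c * tv_dist S (k1 s) (k2 s) + d"
    using set_integrable_kernel_abs_diff[OF K1 K2 s] set_integral_kernel_abs_diff[OF K1 K2 s] k2_int k2_total
    by (simp add: set_integral_add set_integrable_mult_left)
  with nn_integral_indicator_eq_set_integral[OF int] show ?thesis
    using c d k2_nonneg by simp
qed

lemma abs_kernel_step_diff_le:
  fixes k1 k2 :: "'a::euclidean_space \<Rightarrow> 'a \<Rightarrow> real"
  assumes int1: "set_integrable lborel S (\<lambda>s. k1 s s' * p1 s)"
    and int2: "set_integrable lborel S (\<lambda>s. k2 s s' * p2 s)"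
    and k2_nonneg: "\<And>s. 0 \<le> k2 s s'" and p1_nonneg: "\<And>s. 0 \<le> p1 s"
  shows "ennreal \<bar>(LINT s:S|lborel. k1 s s' * p1 s) - (LINT s:S|lborel. k2 s s' * p2 s)\<bar>
    \<le> (\<integral>\<^sup>+s. ennreal (indicator S s * (\<bar>k1 s s' - k2 s s'\<bar> * p1 s + k2 s s' * \<bar>p1 s - p2 s\<bar>)) \<partial>lborel)"
  unfolding set_lebesgue_integral_def
proof (rule abs_integral_diff_le_nn_integral)
  show "integrable lborel (\<lambda>s. indicator S s *\<^sub>R (k1 s s' * p1 s))"
    and "integrable lborel (\<lambda>s. indicator S s *\<^sub>R (k2 s s' * p2 s))"
    using int1 int2 by (simp_all add: set_integrable_def)
  fix s
  have "\<bar>k1 s s' * p1 s - k2 s s' * p2 s\<bar> = \<bar>(k1 s s' - k2 s s') * p1 s + k2 s s' * (p1 s - p2 s)\<bar>"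
    by (simp add: algebra_simps)
  also have "\<dots> \<le> \<bar>(k1 s s' - k2 s s') * p1 s\<bar> + \<bar>k2 s s' * (p1 s - p2 s)\<bar>"
    by (rule abs_triangle_ineq)
  also have "\<dots> = \<bar>k1 s s' - k2 s s'\<bar> * p1 s + k2 s s' * \<bar>p1 s - p2 s\<bar>"
    using p1_nonneg[of s] k2_nonneg[of s] by (simp add: abs_mult)
  finally show "\<bar>indicator S s *\<^sub>R (k1 s s' * p1 s) - indicator S s *\<^sub>R (k2 s s' * p2 s)\<bar>
      \<le> indicator S s * (\<bar>k1 s s' - k2 s s'\<bar> * p1 s + k2 s s' * \<bar>p1 s - p2 s\<bar>)"
    by (simp add: indicator_def)
qed

lemma nn_integral_kernel_step_diff_le:
  fixes k1 k2 :: "'a::euclidean_space \<Rightarrow> 'a \<Rightarrow> real"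
  assumes K1: "stoch_kernel S k1" and K2: "stoch_kernel S k2"
    and D1: "prob_density S p1" and D2: "prob_density S p2" and S[measurable]: "S \<in> sets borel"
  shows "(\<integral>\<^sup>+s'. ennreal (indicator S s' *
      \<bar>(LINT s:S|lborel. k1 s s' * p1 s) - (LINT s:S|lborel. k2 s s' * p2 s)\<bar>) \<partial>lborel)
    \<le> (\<integral>\<^sup>+s. ennreal (indicator S s * (2 * p1 s * tv_dist S (k1 s) (k2 s) + \<bar>p1 s - p2 s\<bar>)) \<partial>lborel)"
proof -
  from K1 K2 have k1: "(\<lambda>x. k1 (fst x) (snd x)) \<in> borel_measurable borel"
    and k2: "(\<lambda>x. k2 (fst x) (snd x)) \<in> borel_measurable borel"
    and k2_nonneg: "\<And>s s'. 0 \<le> k2 s s'" unfolding stoch_kernel_def by auto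
  from D1 D2 have [measurable]: "p1 \<in> borel_measurable borel" "p2 \<in> borel_measurable borel"
    and p1_nonneg: "\<And>s. 0 \<le> p1 s" unfolding prob_density_def by auto
  note borel_measurable_curried2[OF k1, measurable (raw)] borel_measurable_curried2[OF k2, measurable (raw)]
  define G where "G = (\<lambda>s s'. indicator S s' * (indicator S s *
    (\<bar>k1 s s' - k2 s s'\<bar> * p1 s + k2 s s' * \<bar>p1 s - p2 s\<bar>)))"
  have G: "(\<lambda>x. G (fst x) (snd x)) \<in> borel_measurable borel"
    unfolding G_def by measurable
  have "(\<integral>\<^sup>+s'. ennreal (indicator S s' *
      \<bar>(LINT s:S|lborel. k1 s s' * p1 s) - (LINT s:S|lborel. k2 s s' * p2 s)\<bar>) \<partial>lborel)
    \<le> (\<integral>\<^sup>+s'. \<integral>\<^sup>+s. ennreal (G s s') \<partial>lborel \<partial>lborel)"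
    using AE_set_integrable_kernel_step[OF K1 D1 S] AE_set_integrable_kernel_step[OF K2 D2 S]
  proof (intro nn_integral_mono_AE, eventually_elim)
    case (elim s')
    then show ?case
      using abs_kernel_step_diff_le[of S k1 s' p1 k2 p2] k2_nonneg p1_nonneg
      by (cases "s' \<in> S") (simp_all add: G_def)
  qed
  also have "\<dots> = (\<integral>\<^sup>+s. \<integral>\<^sup>+s'. ennreal (G s s') \<partial>lborel \<partial>lborel)"
    by (rule lborel_nn_integral_swap) (use G in measurable)
  also have "\<dots> = (\<integral>\<^sup>+s. ennreal (indicator S s * (2 * p1 s * tv_dist S (k1 s) (k2 s) + \<bar>p1 s - p2 s\<bar>)) \<partial>lborel)"
  proof (intro nn_integral_cong)
    fix s
    show "(\<integral>\<^sup>+s'. ennreal (G s s') \<partial>lborel)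
        = ennreal (indicator S s * (2 * p1 s * tv_dist S (k1 s) (k2 s) + \<bar>p1 s - p2 s\<bar>))"
      using nn_integral_kernel_abs_diff_combination[OF K1 K2 _ p1_nonneg abs_ge_zero]
      by (cases "s \<in> S") (simp_all add: G_def)
  qed
  finally show ?thesis .
qed

lemma L1_dist_kernel_step:
  fixes k1 k2 :: "'a::euclidean_space \<Rightarrow> 'a \<Rightarrow> real"
  assumes K1: "stoch_kernel S k1" and K2: "stoch_kernel S k2"
    and D1: "prob_density S p1" and D2: "prob_density S p2" and S[measurable]: "S \<in> sets borel"
    and tv_le: "(LINT s:S|lborel. p1 s * tv_dist S (k1 s) (k2 s)) \<le> \<delta>"
  shows "(LINT s':S|lborel. \<bar>(LINT s:S|lborel. k1 s s' * p1 s) - (LINT s:S|lborel. k2 s s' * p2 s)\<bar>)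
    \<le> 2 * \<delta> + (LINT s:S|lborel. \<bar>p1 s - p2 s\<bar>)"
proof -
  from D1 D2 have p1_nonneg: "\<And>s. 0 \<le> p1 s" and p1_int: "set_integrable lborel S p1"
    and p2_int: "set_integrable lborel S p2" unfolding prob_density_def by auto
  note tv_nonneg = tv_dist_kernel_nonneg[OF K1 K2]
  have tv_le_1: "\<And>s. s \<in> S \<Longrightarrow> \<bar>tv_dist S (k1 s) (k2 s)\<bar> \<le> 1"
    using tv_dist_kernel_nonneg[OF K1 K2] tv_dist_kernel_le_1[OF K1 K2] by auto
  have int_p1_tv: "set_integrable lborel S (\<lambda>s. p1 s * tv_dist S (k1 s) (k2 s))"
    by (rule set_integrable_density_mult[OF D1 S borel_measurable_tv_dist_kernel[OF K1 K2 S] tv_le_1])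
  have int_abs_diff: "set_integrable lborel S (\<lambda>s. \<bar>p1 s - p2 s\<bar>)"
    by (intro set_integrable_abs set_integral_diff(1) p1_int p2_int)
  have int_bound: "set_integrable lborel S (\<lambda>s. 2 * p1 s * tv_dist S (k1 s) (k2 s) + \<bar>p1 s - p2 s\<bar>)"
    using int_p1_tv int_abs_diff by (simp add: set_integral_add(1) set_integrable_mult_right mult.assoc)
  have bound_nonneg: "0 \<le> 2 * p1 s * tv_dist S (k1 s) (k2 s) + \<bar>p1 s - p2 s\<bar>" if "s \<in> S" for s
    using p1_nonneg[of s] tv_nonneg[OF that] by simp
  have int_step: "set_integrable lborel S
      (\<lambda>s'. \<bar>(LINT s:S|lborel. k1 s s' * p1 s) - (LINT s:S|lborel. k2 s s' * p2 s)\<bar>)"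
    using prob_density_kernel_step[OF K1 D1 S] prob_density_kernel_step[OF K2 D2 S]
    unfolding prob_density_def by (intro set_integrable_abs set_integral_diff(1)) auto
  have "ennreal (LINT s':S|lborel. \<bar>(LINT s:S|lborel. k1 s s' * p1 s) - (LINT s:S|lborel. k2 s s' * p2 s)\<bar>)
      = (\<integral>\<^sup>+s'. ennreal (indicator S s' *
          \<bar>(LINT s:S|lborel. k1 s s' * p1 s) - (LINT s:S|lborel. k2 s s' * p2 s)\<bar>) \<partial>lborel)"
    by (rule nn_integral_indicator_eq_set_integral[OF int_step, symmetric]) simp
  also have "\<dots> \<le> (\<integral>\<^sup>+s. ennreal (indicator S s *
      (2 * p1 s * tv_dist S (k1 s) (k2 s) + \<bar>p1 s - p2 s\<bar>)) \<partial>lborel)"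
    by (rule nn_integral_kernel_step_diff_le[OF K1 K2 D1 D2 S])
  also have "\<dots> = ennreal (LINT s:S|lborel. 2 * p1 s * tv_dist S (k1 s) (k2 s) + \<bar>p1 s - p2 s\<bar>)"
    by (rule nn_integral_indicator_eq_set_integral[OF int_bound bound_nonneg])
  finally have "ennreal (LINT s':S|lborel. \<bar>(LINT s:S|lborel. k1 s s' * p1 s) - (LINT s:S|lborel. k2 s s' * p2 s)\<bar>)
      \<le> ennreal (LINT s:S|lborel. 2 * p1 s * tv_dist S (k1 s) (k2 s) + \<bar>p1 s - p2 s\<bar>)" .
  then have "(LINT s':S|lborel. \<bar>(LINT s:S|lborel. k1 s s' * p1 s) - (LINT s:S|lborel. k2 s s' * p2 s)\<bar>)
      \<le> (LINT s:S|lborel. 2 * p1 s * tv_dist S (k1 s) (k2 s) + \<bar>p1 s - p2 s\<bar>)"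
    using set_integral_nonneg_on[of S, OF bound_nonneg] by simp
  also have "\<dots> = 2 * (LINT s:S|lborel. p1 s * tv_dist S (k1 s) (k2 s)) + (LINT s:S|lborel. \<bar>p1 s - p2 s\<bar>)"
    using int_p1_tv int_abs_diff by (simp add: set_integral_add set_integrable_mult_right mult.assoc)
  also have "\<dots> \<le> 2 * \<delta> + (LINT s:S|lborel. \<bar>p1 s - p2 s\<bar>)"
    using tv_le by simp
  finally show ?thesis .
qed

lemma L1_dist_marginal_le:
  fixes k1 k2 :: "'a::euclidean_space \<Rightarrow> 'a \<Rightarrow> real"
  assumes K1: "stoch_kernel S k1" and K2: "stoch_kernel S k2" and D0: "prob_density S p0"
    and S: "S \<in> sets borel"
    and tv_le: "\<And>t. (LINT s:S|lborel. marginal S p0 k1 t s * tv_dist S (k1 s) (k2 s)) \<le> \<delta>"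
  shows "(LINT s:S|lborel. \<bar>marginal S p0 k1 t s - marginal S p0 k2 t s\<bar>) \<le> 2 * real t * \<delta>"
proof (induction t)
  case (Suc t)
  have "(LINT s:S|lborel. \<bar>marginal S p0 k1 (Suc t) s - marginal S p0 k2 (Suc t) s\<bar>)
      \<le> 2 * \<delta> + (LINT s:S|lborel. \<bar>marginal S p0 k1 t s - marginal S p0 k2 t s\<bar>)"
    using L1_dist_kernel_step[OF K1 K2 prob_density_marginal[OF K1 D0 S] prob_density_marginal[OF K2 D0 S]
        S tv_le] by simp
  with Suc show ?case by (simp add: algebra_simps)
qed simp

section \<open>Gaussian policies\<close>

lemma has_real_derivative_normal_density_mean:
  assumes "0 < \<sigma>"
  shows "((\<lambda>m. normal_density m \<sigma> a) has_real_derivative (normal_density m \<sigma> a * (a - m) / \<sigma>\<^sup>2)) (at m)"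
proof -
  have "((\<lambda>m. exp (-(a - m)\<^sup>2 / (2 * \<sigma>\<^sup>2))) has_real_derivative
      exp (-(a - m)\<^sup>2 / (2 * \<sigma>\<^sup>2)) * ((a - m) / \<sigma>\<^sup>2)) (at m)"
    using assms by (auto intro!: derivative_eq_intros simp: field_simps power2_eq_square)
  from DERIV_cmult[OF this, of "1 / sqrt (2 * pi * \<sigma>\<^sup>2)"] show ?thesis
    unfolding normal_density_def by (simp add: mult_ac)
qed

lemma abs_normal_density_diff_le_nn_integral:
  fixes \<sigma> m1 m2 :: real
  assumes \<sigma>: "0 < \<sigma>" and le: "m1 \<le> m2"
  shows "ennreal \<bar>normal_density m2 \<sigma> a - normal_density m1 \<sigma> a\<bar>
    \<le> (\<integral>\<^sup>+m. ennreal (indicator {m1..m2} m * \<bar>normal_density m \<sigma> a * (a - m) / \<sigma>\<^sup>2\<bar>) \<partial>lborel)"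
proof -
  define g where "g = (\<lambda>m. normal_density m \<sigma> a * (a - m) / \<sigma>\<^sup>2)"
  have cont: "continuous_on {m1..m2} g"
    unfolding g_def normal_density_def by (intro continuous_intros) (use \<sigma> in auto)
  have "(LBINT m=m1..m2. g m) = normal_density m2 \<sigma> a - normal_density m1 \<sigma> a"
  proof (rule interval_integral_FTC_finite)
    show "continuous_on {min m1 m2..max m1 m2} g" using cont le by simp
    fix x
    show "((\<lambda>m. normal_density m \<sigma> a) has_vector_derivative g x) (at x within {min m1 m2..max m1 m2})"
      using has_real_derivative_normal_density_mean[OF \<sigma>, of a x] unfolding g_def
      by (simp add: has_real_derivative_iff_has_vector_derivative[symmetric] has_field_derivative_at_within)
  qed
  then have "(LINT m|lborel. indicator {m1..m2} m *\<^sub>R g m) = normal_density m2 \<sigma> a - normal_density m1 \<sigma> a"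
    using le by (simp add: interval_integral_Icc set_lebesgue_integral_def)
  moreover have "integrable lborel (\<lambda>m. indicator {m1..m2} m *\<^sub>R g m)"
    using borel_integrable_atLeastAtMost'[OF cont] by (simp add: set_integrable_def)
  from integral_norm_bound_ennreal[OF this]
  have "ennreal (norm (LINT m|lborel. indicator {m1..m2} m *\<^sub>R g m))
      \<le> (\<integral>\<^sup>+m. ennreal (indicator {m1..m2} m * \<bar>g m\<bar>) \<partial>lborel)"
    by (simp add: abs_mult)
  ultimately show ?thesis by (simp add: g_def)
qed

lemma nn_integral_abs_normal_density_deriv:
  assumes \<sigma>: "0 < \<sigma>"
  shows "(\<integral>\<^sup>+a. ennreal \<bar>normal_density m \<sigma> a * (a - m) / \<sigma>\<^sup>2\<bar> \<partial>lborel) = ennreal (sqrt (2 / pi) / \<sigma>)"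
proof -
  have "has_bochner_integral lborel (\<lambda>a. normal_density m \<sigma> a * \<bar>a - m\<bar> ^ (2 * 0 + 1))
      (2 ^ 0 * \<sigma> ^ (2 * 0 + 1) * fact 0 * sqrt (2 / pi))"
    using normal_moment_abs_odd \<sigma> by blast
  from has_bochner_integral_divide_zero[OF this, of "\<sigma>\<^sup>2"]
  have "has_bochner_integral lborel (\<lambda>a. \<bar>normal_density m \<sigma> a * (a - m) / \<sigma>\<^sup>2\<bar>) (sqrt (2 / pi) / \<sigma>)"
    using \<sigma> by (simp add: abs_mult power2_eq_square)
  from nn_integral_eq_integral[OF integrable.intros[OF this]] has_bochner_integral_integral_eq[OF this]
  show ?thesis by simp
qed

text \<open>Integrating the derivative in the mean gives the constant sqrt(2/pi) \<le> 1.\<close>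
lemma nn_integral_normal_density_diff_le:
  fixes \<sigma> m1 m2 :: real
  assumes \<sigma>: "0 < \<sigma>" and le: "m1 \<le> m2"
  shows "(\<integral>\<^sup>+a. ennreal \<bar>normal_density m2 \<sigma> a - normal_density m1 \<sigma> a\<bar> \<partial>lborel) \<le> ennreal ((m2 - m1) / \<sigma>)"
proof -
  define g where "g = (\<lambda>m a. \<bar>normal_density m \<sigma> a * (a - m) / \<sigma>\<^sup>2\<bar>)"
  have "(\<integral>\<^sup>+a. ennreal \<bar>normal_density m2 \<sigma> a - normal_density m1 \<sigma> a\<bar> \<partial>lborel)
      \<le> (\<integral>\<^sup>+a. \<integral>\<^sup>+m. ennreal (indicator {m1..m2} m * g m a) \<partial>lborel \<partial>lborel)"
    unfolding g_def by (intro nn_integral_mono abs_normal_density_diff_le_nn_integral \<sigma> le)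
  also have "\<dots> = (\<integral>\<^sup>+m. \<integral>\<^sup>+a. ennreal (indicator {m1..m2} m * g m a) \<partial>lborel \<partial>lborel)"
    by (rule lborel_nn_integral_swap) (unfold g_def normal_density_def, measurable)
  also have "\<dots> = (\<integral>\<^sup>+m. ennreal (sqrt (2 / pi) / \<sigma>) * indicator {m1..m2} m \<partial>lborel)"
  proof (intro nn_integral_cong)
    fix m
    have "(\<integral>\<^sup>+a. ennreal (indicator {m1..m2} m * g m a) \<partial>lborel)
        = (\<integral>\<^sup>+a. indicator {m1..m2} m * ennreal (g m a) \<partial>lborel)"
      by (intro nn_integral_cong) (simp add: indicator_def)
    also have "\<dots> = indicator {m1..m2} m * (\<integral>\<^sup>+a. ennreal (g m a) \<partial>lborel)"
      by (rule nn_integral_cmult) (unfold g_def normal_density_def, measurable)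
    finally show "(\<integral>\<^sup>+a. ennreal (indicator {m1..m2} m * g m a) \<partial>lborel)
        = ennreal (sqrt (2 / pi) / \<sigma>) * indicator {m1..m2} m"
      using nn_integral_abs_normal_density_deriv[OF \<sigma>] by (simp add: g_def mult.commute)
  qed
  also have "\<dots> = ennreal (sqrt (2 / pi) / \<sigma>) * ennreal (m2 - m1)"
    using le by (subst nn_integral_cmult_indicator) auto
  also have "\<dots> = ennreal (sqrt (2 / pi) / \<sigma> * (m2 - m1))"
    using \<sigma> le by (subst ennreal_mult) auto
  also have "\<dots> \<le> ennreal ((m2 - m1) / \<sigma>)"
  proof (intro ennreal_leI)
    have "sqrt (2 / pi) \<le> 1" using pi_gt3 by simp
    then have "sqrt (2 / pi) * (m2 - m1) / \<sigma> \<le> 1 * (m2 - m1) / \<sigma>"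
      using le \<sigma> by (intro divide_right_mono mult_right_mono) auto
    then show "sqrt (2 / pi) / \<sigma> * (m2 - m1) \<le> (m2 - m1) / \<sigma>" by simp
  qed
  finally show ?thesis .
qed

lemma normal_density_L1_dist_le:
  fixes \<sigma> m1 m2 :: real
  assumes \<sigma>: "0 < \<sigma>"
  shows "(LINT a|lborel. \<bar>normal_density m1 \<sigma> a - normal_density m2 \<sigma> a\<bar>) \<le> \<bar>m1 - m2\<bar> / \<sigma>"
proof -
  have "(\<integral>\<^sup>+a. ennreal \<bar>normal_density m1 \<sigma> a - normal_density m2 \<sigma> a\<bar> \<partial>lborel) \<le> ennreal (\<bar>m1 - m2\<bar> / \<sigma>)"
    using nn_integral_normal_density_diff_le[OF \<sigma>, of m1 m2] nn_integral_normal_density_diff_le[OF \<sigma>, of m2 m1]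
    by (cases "m1 \<le> m2") (simp_all add: abs_minus_commute)
  moreover have "integrable lborel (\<lambda>a. \<bar>normal_density m1 \<sigma> a - normal_density m2 \<sigma> a\<bar>)"
    using \<sigma> by simp
  ultimately show ?thesis using \<sigma> by (simp add: nn_integral_eq_integral)
qed

lemma
  fixes \<rho> :: "real \<Rightarrow> real"
  assumes [measurable]: "\<rho> \<in> borel_measurable borel" and bound: "\<And>a. \<bar>\<rho> a\<bar> \<le> R" and \<sigma>: "0 < \<sigma>"
  shows integrable_normal_density_mult: "integrable lborel (\<lambda>a. normal_density m \<sigma> a * \<rho> a)"
    and abs_normal_expectation_le: "\<bar>LINT a|lborel. normal_density m \<sigma> a * \<rho> a\<bar> \<le> R"
proof -
  have pointwise: "\<bar>normal_density m \<sigma> a * \<rho> a\<bar> \<le> normal_density m \<sigma> a * R" for a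
    using bound[of a] by (auto simp: abs_mult intro!: mult_left_mono)
  have majorant: "integrable lborel (\<lambda>a. normal_density m \<sigma> a * R)" using \<sigma> by simp
  show int: "integrable lborel (\<lambda>a. normal_density m \<sigma> a * \<rho> a)"
    by (rule Bochner_Integration.integrable_bound[OF majorant])
      (use pointwise in \<open>auto intro!: AE_I2 intro: order_trans[OF _ abs_ge_self]\<close>)
  have "\<bar>LINT a|lborel. normal_density m \<sigma> a * \<rho> a\<bar> \<le> (LINT a|lborel. normal_density m \<sigma> a * R)"
    by (rule integral_abs_bound_integral[OF int majorant pointwise])
  also have "\<dots> = R" using \<sigma> by simp
  finally show "\<bar>LINT a|lborel. normal_density m \<sigma> a * \<rho> a\<bar> \<le> R" .
qed

lemma normal_expectation_diff_le:
  fixes \<rho> :: "real \<Rightarrow> real"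
  assumes \<rho>: "\<rho> \<in> borel_measurable borel" and bound: "\<And>a. \<bar>\<rho> a\<bar> \<le> R" and \<sigma>: "0 < \<sigma>"
  shows "\<bar>(LINT a|lborel. normal_density m1 \<sigma> a * \<rho> a) - (LINT a|lborel. normal_density m2 \<sigma> a * \<rho> a)\<bar>
    \<le> R * (\<bar>m1 - m2\<bar> / \<sigma>)"
proof -
  note int1 = integrable_normal_density_mult[OF \<rho> bound \<sigma>, of m1]
    and int2 = integrable_normal_density_mult[OF \<rho> bound \<sigma>, of m2]
  have R: "0 \<le> R" using bound[of 0] by simp
  have "\<bar>(LINT a|lborel. normal_density m1 \<sigma> a * \<rho> a) - (LINT a|lborel. normal_density m2 \<sigma> a * \<rho> a)\<bar>
      = \<bar>LINT a|lborel. (normal_density m1 \<sigma> a - normal_density m2 \<sigma> a) * \<rho> a\<bar>"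
    using int1 int2 by (simp add: left_diff_distrib)
  also have "\<dots> \<le> (LINT a|lborel. R * \<bar>normal_density m1 \<sigma> a - normal_density m2 \<sigma> a\<bar>)"
  proof (rule integral_abs_bound_integral)
    show "integrable lborel (\<lambda>a. (normal_density m1 \<sigma> a - normal_density m2 \<sigma> a) * \<rho> a)"
      using int1 int2 by (simp add: left_diff_distrib)
    show "integrable lborel (\<lambda>a. R * \<bar>normal_density m1 \<sigma> a - normal_density m2 \<sigma> a\<bar>)"
      using \<sigma> by simp
    fix a
    have "\<bar>\<rho> a\<bar> * \<bar>normal_density m1 \<sigma> a - normal_density m2 \<sigma> a\<bar>
        \<le> R * \<bar>normal_density m1 \<sigma> a - normal_density m2 \<sigma> a\<bar>"
      using bound[of a] by (rule mult_right_mono) simp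
    then show "\<bar>(normal_density m1 \<sigma> a - normal_density m2 \<sigma> a) * \<rho> a\<bar>
        \<le> R * \<bar>normal_density m1 \<sigma> a - normal_density m2 \<sigma> a\<bar>"
      by (simp add: abs_mult mult.commute)
  qed
  also have "\<dots> = R * (LINT a|lborel. \<bar>normal_density m1 \<sigma> a - normal_density m2 \<sigma> a\<bar>)" by simp
  also have "\<dots> \<le> R * (\<bar>m1 - m2\<bar> / \<sigma>)"
    using normal_density_L1_dist_le[OF \<sigma>] R by (intro mult_left_mono) auto
  finally show ?thesis .
qed

lemma
  fixes f :: "'a::euclidean_space \<Rightarrow> real"
  assumes [measurable]: "f \<in> borel_measurable borel" and \<sigma>: "0 < \<sigma>"
  shows borel_measurable_gauss_policy:
      "(\<lambda>x. gauss_policy f \<sigma> (fst x) (snd x)) \<in> borel_measurable borel"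
    and gauss_policy_nonneg: "0 \<le> gauss_policy f \<sigma> s a"
    and nn_integral_gauss_policy: "(\<integral>\<^sup>+a. ennreal (gauss_policy f \<sigma> s a) \<partial>lborel) = 1"
proof -
  show "(\<lambda>x. gauss_policy f \<sigma> (fst x) (snd x)) \<in> borel_measurable borel"
    unfolding gauss_policy_def normal_density_def by measurable
  show "0 \<le> gauss_policy f \<sigma> s a" by (simp add: gauss_policy_def)
  show "(\<integral>\<^sup>+a. ennreal (gauss_policy f \<sigma> s a) \<partial>lborel) = 1"
    unfolding gauss_policy_def using nn_integral_eq_integral[of lborel "normal_density (f s) \<sigma>"] \<sigma> by simp
qed

section \<open>Discounted sums\<close>

lemma sums_of_nat_mult_power:
  fixes \<gamma> :: real
  assumes "0 \<le> \<gamma>" "\<gamma> < 1"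
  shows "(\<lambda>n. real n * \<gamma> ^ n) sums (\<gamma> / (1 - \<gamma>)\<^sup>2)"
proof -
  have "(\<lambda>n. real (Suc n) * \<gamma> ^ n) sums (1 / (1 - \<gamma>)\<^sup>2)"
    using geometric_deriv_sums[of \<gamma>] assms by simp
  from sums_mult[OF this, of \<gamma>] have "(\<lambda>n. real (Suc n) * \<gamma> ^ Suc n) sums (\<gamma> / (1 - \<gamma>)\<^sup>2)"
    by (simp add: mult_ac)
  then show ?thesis using sums_Suc_iff[of "\<lambda>n. real n * \<gamma> ^ n"] by simp
qed

lemma discounted_sum_diff_le:
  fixes x1 x2 :: "nat \<Rightarrow> real" and T :: enat
  assumes \<gamma>: "0 \<le> \<gamma>" "\<gamma> < 1" and bound1: "\<And>t. \<bar>x1 t\<bar> \<le> R" and bound2: "\<And>t. \<bar>x2 t\<bar> \<le> R"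
    and diff: "\<And>t. \<bar>x1 t - x2 t\<bar> \<le> A + B * real t"
  shows "\<bar>(\<Sum>t. if enat t \<le> T then \<gamma> ^ t * x1 t else 0) - (\<Sum>t. if enat t \<le> T then \<gamma> ^ t * x2 t else 0)\<bar>
    \<le> A / (1 - \<gamma>) + B * (\<gamma> / (1 - \<gamma>)\<^sup>2)"
proof -
  have geometric: "(\<lambda>t. \<gamma> ^ t) sums (1 / (1 - \<gamma>))" using geometric_sums[of \<gamma>] \<gamma> by simp
  have summable_R: "summable (\<lambda>t. R * \<gamma> ^ t)"
    using geometric by (intro summable_mult sums_summable) auto
  have summable: "summable (\<lambda>t. if enat t \<le> T then \<gamma> ^ t * x t else 0)" if "\<And>t. \<bar>x t\<bar> \<le> R" for x
  proof (rule summable_comparison_test'[OF summable_R])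
    fix n
    have "\<gamma> ^ n * \<bar>x n\<bar> \<le> \<gamma> ^ n * R" using that[of n] \<gamma> by (intro mult_left_mono) auto
    then show "norm (if enat n \<le> T then \<gamma> ^ n * x n else 0) \<le> R * \<gamma> ^ n"
      using \<gamma> that[of 0] by (auto simp: abs_mult mult.commute)
  qed
  have majorant: "(\<lambda>t. A * \<gamma> ^ t + B * (real t * \<gamma> ^ t)) sums (A * (1 / (1 - \<gamma>)) + B * (\<gamma> / (1 - \<gamma>)\<^sup>2))"
    by (intro sums_add sums_mult geometric sums_of_nat_mult_power \<gamma>)
  define d where "d = (\<lambda>t. (if enat t \<le> T then \<gamma> ^ t * x1 t else 0) - (if enat t \<le> T then \<gamma> ^ t * x2 t else 0))"
  have d_le: "\<bar>d t\<bar> \<le> A * \<gamma> ^ t + B * (real t * \<gamma> ^ t)" for t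
  proof -
    have "\<bar>d t\<bar> \<le> \<gamma> ^ t * \<bar>x1 t - x2 t\<bar>"
      unfolding d_def using \<gamma> by (auto simp: abs_mult right_diff_distrib[symmetric])
    also have "\<dots> \<le> \<gamma> ^ t * (A + B * real t)" using diff[of t] \<gamma> by (intro mult_left_mono) auto
    finally show ?thesis by (simp add: algebra_simps)
  qed
  have summable_d: "summable (\<lambda>t. \<bar>d t\<bar>)"
    by (rule summable_comparison_test'[OF sums_summable[OF majorant]]) (use d_le in auto)
  have "(\<Sum>t. if enat t \<le> T then \<gamma> ^ t * x1 t else 0) - (\<Sum>t. if enat t \<le> T then \<gamma> ^ t * x2 t else 0)
      = (\<Sum>t. d t)"
    unfolding d_def using suminf_diff[OF summable[OF bound1] summable[OF bound2]] by simp
  also have "\<bar>\<dots>\<bar> \<le> (\<Sum>t. \<bar>d t\<bar>)" by (rule summable_rabs[OF summable_d])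
  also have "\<dots> \<le> (\<Sum>t. A * \<gamma> ^ t + B * (real t * \<gamma> ^ t))"
    by (rule suminf_le[OF d_le summable_d sums_summable[OF majorant]])
  also have "\<dots> = A / (1 - \<gamma>) + B * (\<gamma> / (1 - \<gamma>)\<^sup>2)" using sums_unique[OF majorant] by simp
  finally show ?thesis .
qed

section \<open>The pruned network\<close>

lemma sets_borel_state_space: "(state_space :: (real^'n) set) \<in> sets borel"
proof -
  have "closed (state_space :: (real^'n) set)"
    unfolding state_space_def
    by (intro closed_Collect_all closed_Collect_conj closed_Collect_le linear_continuous_on
        bounded_linear_vec_nth continuous_on_const)
  then show ?thesis by (rule borel_closed)
qed

lemma zero_in_state_space: "0 \<in> state_space"
  by (simp add: state_space_def)

lemma borel_measurable_net:
  assumes lip: "\<And>x y. \<bar>\<phi> x - \<phi> y\<bar> \<le> L * \<bar>x - y\<bar>"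
  shows "net W1 b1 W2 b2 \<phi> \<in> borel_measurable borel"
proof -
  have "0 \<le> L" using lip[of 1 0] by simp
  with lip have "L-lipschitz_on UNIV \<phi>"
    by (intro lipschitz_onI) (auto simp: dist_real_def)
  then have [measurable]: "\<phi> \<in> borel_measurable borel"
    by (intro borel_measurable_continuous_onI lipschitz_on_continuous_on)
  show ?thesis unfolding net_def[abs_def] by measurable
qed

lemma net_prune_dist_le:
  fixes W1 :: "real ^ 'd ^ 'h" and s :: "real ^ 'd"
  assumes lip: "\<And>x y. \<bar>\<phi> x - \<phi> y\<bar> \<le> L * \<bar>x - y\<bar>" and s: "s \<in> state_space"
  shows "\<bar>net W1 b1 W2 b2 \<phi> s - net (prune j W1) b1 W2 b2 \<phi> s\<bar> \<le> L * (\<Sum>i\<in>UNIV. \<bar>W2 $ i * W1 $ i $ j\<bar>)"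
proof -
  define u where "u = (\<lambda>i. (\<Sum>k\<in>UNIV. W1 $ i $ k * s $ k) + b1 $ i)"
  define v where "v = (\<lambda>i. (\<Sum>k\<in>UNIV. prune j W1 $ i $ k * s $ k) + b1 $ i)"
  have L: "0 \<le> L" using lip[of 1 0] by simp
  have "\<bar>s $ j\<bar> \<le> 1" using s by (auto simp: state_space_def)
  have "u i - v i = W1 $ i $ j * s $ j" for i
  proof -
    have "u i - v i = (\<Sum>k\<in>UNIV. W1 $ i $ k * s $ k - prune j W1 $ i $ k * s $ k)"
      unfolding u_def v_def sum_subtractf by simp
    also have "\<dots> = (\<Sum>k\<in>UNIV. if k = j then W1 $ i $ j * s $ j else 0)"
      by (intro sum.cong) (auto simp: prune_def)
    finally show ?thesis by simp
  qed
  then have unit_le: "\<bar>\<phi> (u i) - \<phi> (v i)\<bar> \<le> L * \<bar>W1 $ i $ j\<bar>" for i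
    using lip[of "u i" "v i"] \<open>\<bar>s $ j\<bar> \<le> 1\<close> L
    by (auto simp: abs_mult intro: order_trans intro!: mult_left_mono mult_right_le_one_le)
  have "\<bar>net W1 b1 W2 b2 \<phi> s - net (prune j W1) b1 W2 b2 \<phi> s\<bar> = \<bar>\<Sum>i\<in>UNIV. W2 $ i * (\<phi> (u i) - \<phi> (v i))\<bar>"
    unfolding net_def u_def v_def by (simp add: sum_subtractf[symmetric] right_diff_distrib)
  also have "\<dots> \<le> (\<Sum>i\<in>UNIV. \<bar>W2 $ i\<bar> * \<bar>\<phi> (u i) - \<phi> (v i)\<bar>)"
    unfolding abs_mult[symmetric] by (rule sum_abs)
  also have "\<dots> \<le> (\<Sum>i\<in>UNIV. \<bar>W2 $ i\<bar> * (L * \<bar>W1 $ i $ j\<bar>))"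
    by (intro sum_mono mult_left_mono unit_le) simp
  also have "\<dots> = L * (\<Sum>i\<in>UNIV. \<bar>W2 $ i * W1 $ i $ j\<bar>)"
    by (simp add: sum_distrib_left abs_mult mult_ac)
  finally show ?thesis .
qed

section \<open>The return bound\<close>

lemma discounted_return_diff_le:
  fixes k1 k2 :: "'a::euclidean_space \<Rightarrow> 'a \<Rightarrow> real" and \<rho>1 \<rho>2 :: "'a \<Rightarrow> real" and T :: enat
  assumes K1: "stoch_kernel S k1" and K2: "stoch_kernel S k2" and D0: "prob_density S p0"
    and S: "S \<in> sets borel" and \<gamma>: "0 \<le> \<gamma>" "\<gamma> < 1"
    and \<rho>1: "\<rho>1 \<in> borel_measurable borel" and \<rho>2: "\<rho>2 \<in> borel_measurable borel"
    and bound1: "\<And>s. s \<in> S \<Longrightarrow> \<bar>\<rho>1 s\<bar> \<le> R" and bound2: "\<And>s. s \<in> S \<Longrightarrow> \<bar>\<rho>2 s\<bar> \<le> R"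
    and \<rho>_diff: "\<And>s. s \<in> S \<Longrightarrow> \<bar>\<rho>1 s - \<rho>2 s\<bar> \<le> E" and R: "0 \<le> R"
    and tv_le: "\<And>t. (LINT s:S|lborel. marginal S p0 k1 t s * tv_dist S (k1 s) (k2 s)) \<le> \<delta>"
  shows "\<bar>(\<Sum>t. if enat t \<le> T then \<gamma> ^ t * (LINT s:S|lborel. marginal S p0 k1 t s * \<rho>1 s) else 0)
        - (\<Sum>t. if enat t \<le> T then \<gamma> ^ t * (LINT s:S|lborel. marginal S p0 k2 t s * \<rho>2 s) else 0)\<bar>
    \<le> E / (1 - \<gamma>) + 2 * R * \<delta> * (\<gamma> / (1 - \<gamma>)\<^sup>2)"
proof (rule discounted_sum_diff_le[OF \<gamma>])
  note D1 = prob_density_marginal[OF K1 D0 S] and D2 = prob_density_marginal[OF K2 D0 S]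
  fix t
  show "\<bar>LINT s:S|lborel. marginal S p0 k1 t s * \<rho>1 s\<bar> \<le> R"
    by (rule abs_density_expectation_le[OF D1 S \<rho>1 bound1])
  show "\<bar>LINT s:S|lborel. marginal S p0 k2 t s * \<rho>2 s\<bar> \<le> R"
    by (rule abs_density_expectation_le[OF D2 S \<rho>2 bound2])
  have "\<bar>(LINT s:S|lborel. marginal S p0 k1 t s * \<rho>1 s) - (LINT s:S|lborel. marginal S p0 k2 t s * \<rho>2 s)\<bar>
      \<le> E + R * (2 * real t * \<delta>)"
    by (rule density_expectation_diff_le[OF D1 D2 S \<rho>1 \<rho>2 bound1 bound2 \<rho>_diff
          L1_dist_marginal_le[OF K1 K2 D0 S tv_le] R])
  then show "\<bar>(LINT s:S|lborel. marginal S p0 k1 t s * \<rho>1 s) - (LINT s:S|lborel. marginal S p0 k2 t s * \<rho>2 s)\<bar>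
      \<le> E + 2 * R * \<delta> * real t"
    by (simp add: mult_ac)
qed

lemma J_gauss_policy_diff_le:
  fixes f1 f2 :: "'a::euclidean_space \<Rightarrow> real" and \<sigma> :: real and T :: enat
  defines "\<pi>1 \<equiv> gauss_policy f1 \<sigma>" and "\<pi>2 \<equiv> gauss_policy f2 \<sigma>"
  assumes K1: "stoch_kernel S (induced_kernel P \<pi>1)" and K2: "stoch_kernel S (induced_kernel P \<pi>2)"
    and D0: "prob_density S p0" and S: "S \<in> sets borel" and \<gamma>: "0 \<le> \<gamma>" "\<gamma> < 1"
    and [measurable]: "f1 \<in> borel_measurable borel" "f2 \<in> borel_measurable borel"
    and r: "(\<lambda>x. r (fst x) (snd x)) \<in> borel_measurable borel"
    and r_abs: "\<And>s a. s \<in> S \<Longrightarrow> \<bar>r s a\<bar> \<le> R" and R: "0 \<le> R"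
    and f_dist: "\<And>s. s \<in> S \<Longrightarrow> \<bar>f1 s - f2 s\<bar> \<le> B" and \<sigma>: "0 < \<sigma>"
    and tv_le: "\<And>t. (LINT s:S|lborel. marginal S p0 (induced_kernel P \<pi>1) t s *
      tv_dist S (induced_kernel P \<pi>1 s) (induced_kernel P \<pi>2 s)) \<le> \<delta>"
  shows "\<bar>J S P p0 r \<gamma> T \<pi>1 - J S P p0 r \<gamma> T \<pi>2\<bar>
    \<le> R * B / \<sigma> / (1 - \<gamma>) + 2 * R * \<delta> * (\<gamma> / (1 - \<gamma>)\<^sup>2)"
proof -
  note borel_measurable_curried2[OF r, measurable (raw)]
  define \<rho> where "\<rho> = (\<lambda>f s. LINT a|lborel. normal_density (f s) \<sigma> a * r s a)"
  have \<rho>_measurable: "\<rho> f \<in> borel_measurable borel" if [measurable]: "f \<in> borel_measurable borel" for f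
  proof -
    note borel_measurable_curried2[OF borel_measurable_gauss_policy[OF that \<sigma>], measurable (raw)]
    have "(\<lambda>x. gauss_policy f \<sigma> (fst x) (snd x) * r (fst x) (snd x)) \<in> borel_measurable borel"
      by measurable
    from borel_measurable_lborel_integral_curried[OF this] show ?thesis
      unfolding \<rho>_def gauss_policy_def by simp
  qed
  have r_section: "(\<lambda>a. r s a) \<in> borel_measurable borel" for s by measurable
  have \<rho>_bound: "\<bar>\<rho> f s\<bar> \<le> R" if "s \<in> S" for f s
    unfolding \<rho>_def by (rule abs_normal_expectation_le[OF r_section r_abs[OF that] \<sigma>])
  have \<rho>_diff: "\<bar>\<rho> f1 s - \<rho> f2 s\<bar> \<le> R * B / \<sigma>" if "s \<in> S" for s
  proof -
    have "\<bar>\<rho> f1 s - \<rho> f2 s\<bar> \<le> R * (\<bar>f1 s - f2 s\<bar> / \<sigma>)"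
      unfolding \<rho>_def by (rule normal_expectation_diff_le[OF r_section r_abs[OF that] \<sigma>])
    also have "\<dots> \<le> R * (B / \<sigma>)"
      using f_dist[OF that] R \<sigma> by (intro mult_left_mono divide_right_mono) auto
    finally show ?thesis by simp
  qed
  have "J S P p0 r \<gamma> T \<pi>1 - J S P p0 r \<gamma> T \<pi>2
    = (\<Sum>t. if enat t \<le> T then \<gamma> ^ t * (LINT s:S|lborel. marginal S p0 (induced_kernel P \<pi>1) t s * \<rho> f1 s) else 0)
    - (\<Sum>t. if enat t \<le> T then \<gamma> ^ t * (LINT s:S|lborel. marginal S p0 (induced_kernel P \<pi>2) t s * \<rho> f2 s) else 0)"
    unfolding J_def \<rho>_def \<pi>1_def \<pi>2_def gauss_policy_def ..
  also have "\<bar>\<dots>\<bar> \<le> R * B / \<sigma> / (1 - \<gamma>) + 2 * R * \<delta> * (\<gamma> / (1 - \<gamma>)\<^sup>2)"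
    by (rule discounted_return_diff_le[OF K1 K2 D0 S \<gamma> \<rho>_measurable \<rho>_measurable \<rho>_bound \<rho>_bound \<rho>_diff R tv_le])
      measurable
  finally show ?thesis .
qed

theorem theorem1:
  fixes P :: "real ^ 'd \<Rightarrow> real \<Rightarrow> real ^ 'd \<Rightarrow> real"
    and p0 :: "real ^ 'd \<Rightarrow> real"
    and r :: "real ^ 'd \<Rightarrow> real \<Rightarrow> real"
    and \<gamma> rmin rmax :: real and T :: enat
    and W1 :: "real ^ 'd ^ 'h" and b1 W2 :: "real ^ 'h" and b2 :: real
    and \<phi> :: "real \<Rightarrow> real" and a b L\<phi> :: real
    and j :: 'd and \<sigma>f \<delta> :: real
  defines "S \<equiv> (state_space :: (real ^ 'd) set)"
    and "\<pi>1 \<equiv> gauss_policy (net W1 b1 W2 b2 \<phi>) \<sigma>f"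
    and "\<pi>2 \<equiv> gauss_policy (net (prune j W1) b1 W2 b2 \<phi>) \<sigma>f"
    and "Bj \<equiv> L\<phi> * (\<Sum>i\<in>UNIV. \<bar>W2 $ i * W1 $ i $ j\<bar>)"
  assumes gamma: "0 \<le> \<gamma>" "\<gamma> < 1"
    and P_meas: "(\<lambda>x. P (fst x) (fst (snd x)) (snd (snd x))) \<in> borel_measurable borel"
    and P_nonneg: "\<And>s a s'. 0 \<le> P s a s'"
    and P_int: "\<And>s a. s \<in> S \<Longrightarrow> set_integrable lborel S (P s a)"
    and P_prob: "\<And>s a. s \<in> S \<Longrightarrow> (LINT s':S|lborel. P s a s') = 1"
    and p0_meas: "p0 \<in> borel_measurable borel"
    and p0_nonneg: "\<And>s. 0 \<le> p0 s"
    and p0_int: "set_integrable lborel S p0"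
    and p0_prob: "(LINT s:S|lborel. p0 s) = 1"
    and r_meas: "(\<lambda>x. r (fst x) (snd x)) \<in> borel_measurable borel"
    and r_range: "\<And>s a. s \<in> S \<Longrightarrow> rmin \<le> r s a \<and> r s a \<le> rmax"
    and r_abs: "\<And>s a. s \<in> S \<Longrightarrow> \<bar>r s a\<bar> \<le> rmax"
    and phi_range: "\<And>x. \<phi> x \<in> {a<..<b}"
    and phi_lip: "\<And>x y. \<bar>\<phi> x - \<phi> y\<bar> \<le> L\<phi> * \<bar>x - y\<bar>"
    and sigma_pos: "0 < \<sigma>f"
    and delta_nonneg: "0 \<le> \<delta>"
    and delta_bound: "\<And>t. (LINT s:S|lborel.
            marginal S p0 (induced_kernel P \<pi>1) t s *
            tv_dist S (induced_kernel P \<pi>1 s) (induced_kernel P \<pi>2 s)) \<le> \<delta>"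
  shows "\<bar>J S P p0 r \<gamma> T \<pi>1 - J S P p0 r \<gamma> T \<pi>2\<bar>
           \<le> 2 * rmax * (\<gamma> * \<delta> / (1 - \<gamma>)\<^sup>2 + Bj / (\<sigma>f * (1 - \<gamma>)))"
proof -
  have S: "S \<in> sets borel" unfolding S_def by (rule sets_borel_state_space)
  have rmax: "0 \<le> rmax" using r_abs[of 0 0] zero_in_state_space unfolding S_def by fastforce
  have "0 \<le> L\<phi>" using phi_lip[of 1 0] by simp
  then have Bj: "0 \<le> Bj" unfolding Bj_def by (simp add: sum_nonneg)
  note nets = borel_measurable_net[OF phi_lip, of W1 b1 W2 b2]
    borel_measurable_net[OF phi_lip, of "prune j W1" b1 W2 b2]
  have kernel: "stoch_kernel S (induced_kernel P (gauss_policy f \<sigma>f))" if "f \<in> borel_measurable borel" for f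
    using P_meas P_nonneg P_int P_prob S borel_measurable_gauss_policy[OF that sigma_pos]
      gauss_policy_nonneg[OF that sigma_pos] nn_integral_gauss_policy[OF that sigma_pos]
    by (rule stoch_kernel_induced_kernel)
  have "prob_density S p0"
    unfolding prob_density_def using p0_meas p0_nonneg p0_int p0_prob by auto
  moreover have "\<And>s. s \<in> S \<Longrightarrow> \<bar>net W1 b1 W2 b2 \<phi> s - net (prune j W1) b1 W2 b2 \<phi> s\<bar> \<le> Bj"
    unfolding S_def Bj_def by (rule net_prune_dist_le[OF phi_lip])
  ultimately have "\<bar>J S P p0 r \<gamma> T \<pi>1 - J S P p0 r \<gamma> T \<pi>2\<bar>
      \<le> rmax * Bj / \<sigma>f / (1 - \<gamma>) + 2 * rmax * \<delta> * (\<gamma> / (1 - \<gamma>)\<^sup>2)"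
    unfolding \<pi>1_def \<pi>2_def
    by (intro J_gauss_policy_diff_le[OF kernel[OF nets(1)] kernel[OF nets(2)] _ S gamma nets r_meas r_abs rmax
          _ sigma_pos delta_bound[unfolded \<pi>1_def \<pi>2_def]])
  moreover have "0 \<le> rmax * Bj / \<sigma>f / (1 - \<gamma>)" using rmax Bj sigma_pos gamma by simp
  moreover have "2 * rmax * (\<gamma> * \<delta> / (1 - \<gamma>)\<^sup>2 + Bj / (\<sigma>f * (1 - \<gamma>)))
      = 2 * (rmax * Bj / \<sigma>f / (1 - \<gamma>)) + 2 * rmax * \<delta> * (\<gamma> / (1 - \<gamma>)\<^sup>2)"
    by (simp add: algebra_simps)
  ultimately show ?thesis by linarith
qed

end
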